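(* For every regular language $L\subseteq\Sigma^*$, there is an isomorphism of $\mathbf{JSL}$-dfas $\mathcal{P}(\mathrm{Syn}(L^r))\cong[\mathrm{BLRQ}(L)]^{\mathsf{op}}$ given by \[\{[w_1]_{L^r},\ldots,[w_n]_{L^r}\}\mapsto\bigcap_{i=1}^n\overline{\mathrm{At}(w_i^r)},\] where $\mathrm{At}(x)$ is the unique atom of the boolean algebra $\mathrm{BLRQ}(L)$ containing the word $x$.
   Context: $w^r$ is the reversal of $w$, $L^r=\{w^r:w\in L\}$, $\overline{K}=\Sigma^*\setminus K$, $u^{-1}Lv^{-1}=\{w:uwv\in L\}$. $\mathrm{BLRQ}(L)$ is the boolean subalgebra of $\mathcal{P}(\Sigma^* )$ generated by all two-sided derivatives $u^{-1}Lv^{-1}$, viewed as a $\mathbf{JSL}$-dfa with order $\subseteq$, transitions $K\mapsto a^{-1}K$, initial state $L$, final states the $K$ containing $\epsilon$. The syntactic congruence of a language $K$ is $v\equiv_K w\iff(\forall x,y:\ xvy\in K\Leftrightarrow xwy\in K)$; $[w]_K$ denotes the class of $w$ and $\mathrm{Syn}(K)=\Sigma^*/{\equiv_K}$ is the syntactic monoid, viewed as a dfa with transitions $[w]_K\xrightarrow{a}[wa]_K$, initial state $[\epsilon]_K$, final states $\{[w]_K:w\in K\}$. For a dfa $D$ with state set $Q$, $\mathcal{P}(D)$ is the $\mathbf{JSL}$-dfa with states $(\mathcal{P}(Q),\cup)$, transitions $X\mapsto\delta_a[X]$, initial state $\{q_0\}$, final states the subsets meeting the final states. A $\mathbf{JSL}$-dfa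 is a finite semilattice with join-preserving transitions, an initial state $s_0$ and final states $\{s:s\not\le s_f\}$ for some $s_f$; morphisms are join-preserving maps preserving transitions, initial and final states (both ways). The dual $A^{\mathsf{op}}$ has reversed order, transitions $\delta_a^*(s)=$ largest $t$ with $\delta_a(t)\le s$, initial state the largest non-final state of $A$, final states $\{s:s_0\not\le s\}$. *)

theory Defs
  imports Main
begin

definition rev_lang :: "'a list set \<Rightarrow> 'a list set" where
  "rev_lang L = rev ` L"

definition deriv2 :: "'a list \<Rightarrow> 'a list set \<Rightarrow> 'a list \<Rightarrow> 'a list set" where
  "deriv2 u L v = {w. u @ w @ v \<in> L}"

definition regular :: "'a list set \<Rightarrow> bool" where
  "regular L \<longleftrightarrow> (\<exists>(Q::nat set) \<delta> q0 F. finite Q \<and> q0 \<in> Q \<and> (\<forall>q\<in>Q. \<forall>a. \<delta> q a \<in> Q)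
      \<and> F \<subseteq> Q \<and> L = {w. foldl \<delta> q0 w \<in> F})"

record ('s, 'a) jsl_dfa =
  carrier :: "'s set"
  le :: "'s \<Rightarrow> 's \<Rightarrow> bool"
  trans :: "'a \<Rightarrow> 's \<Rightarrow> 's"
  init :: 's
  final :: "'s set"

definition is_lub :: "('s, 'a) jsl_dfa \<Rightarrow> 's set \<Rightarrow> 's \<Rightarrow> bool" where
  "is_lub A S z \<longleftrightarrow> z \<in> carrier A \<and> (\<forall>x\<in>S. le A x z)
     \<and> (\<forall>y\<in>carrier A. (\<forall>x\<in>S. le A x y) \<longrightarrow> le A z y)"

text \<open>Join-preserving (all finite joins, including the empty join = bottom).\<close>
definition join_pres :: "('s, 'a) jsl_dfa \<Rightarrow> ('t, 'a) jsl_dfa \<Rightarrow> ('s \<Rightarrow> 't) \<Rightarrow> bool" where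
  "join_pres A B f \<longleftrightarrow> (\<forall>S z. finite S \<and> S \<subseteq> carrier A \<and> is_lub A S z \<longrightarrow> is_lub B (f ` S) (f z))"

definition is_jsl_dfa :: "('s, 'a) jsl_dfa \<Rightarrow> bool" where
  "is_jsl_dfa A \<longleftrightarrow> finite (carrier A)
     \<and> (\<forall>x\<in>carrier A. le A x x)
     \<and> (\<forall>x\<in>carrier A. \<forall>y\<in>carrier A. le A x y \<and> le A y x \<longrightarrow> x = y)
     \<and> (\<forall>x\<in>carrier A. \<forall>y\<in>carrier A. \<forall>z\<in>carrier A. le A x y \<and> le A y z \<longrightarrow> le A x z)
     \<and> (\<forall>S. S \<subseteq> carrier A \<longrightarrow> (\<exists>z. is_lub A S z))
     \<and> (\<forall>a. \<forall>x\<in>carrier A. trans A a x \<in> carrier A)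
     \<and> (\<forall>a. join_pres A A (trans A a))
     \<and> init A \<in> carrier A
     \<and> (\<exists>sf\<in>carrier A. final A = {s\<in>carrier A. \<not> le A s sf})"

definition jsl_iso :: "('s, 'a) jsl_dfa \<Rightarrow> ('t, 'a) jsl_dfa \<Rightarrow> ('s \<Rightarrow> 't) \<Rightarrow> bool" where
  "jsl_iso A B f \<longleftrightarrow> bij_betw f (carrier A) (carrier B)
     \<and> join_pres A B f
     \<and> (\<forall>a. \<forall>x\<in>carrier A. f (trans A a x) = trans B a (f x))
     \<and> f (init A) = init B
     \<and> (\<forall>x\<in>carrier A. x \<in> final A \<longleftrightarrow> f x \<in> final B)"

definition largest :: "('s, 'a) jsl_dfa \<Rightarrow> ('s \<Rightarrow> bool) \<Rightarrow> 's" where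
  "largest A P = (THE t. t \<in> carrier A \<and> P t \<and> (\<forall>u\<in>carrier A. P u \<longrightarrow> le A u t))"

definition dual :: "('s, 'a) jsl_dfa \<Rightarrow> ('s, 'a) jsl_dfa" where
  "dual A = \<lparr> carrier = carrier A,
              le = (\<lambda>x y. le A y x),
              trans = (\<lambda>a s. largest A (\<lambda>t. le A (trans A a t) s)),
              init = largest A (\<lambda>s. s \<notin> final A),
              final = {s\<in>carrier A. \<not> le A (init A) s} \<rparr>"

definition syn_equiv :: "'a list set \<Rightarrow> 'a list \<Rightarrow> 'a list \<Rightarrow> bool" where
  "syn_equiv K v w \<longleftrightarrow> (\<forall>x y. x @ v @ y \<in> K \<longleftrightarrow> x @ w @ y \<in> K)"

definition syn_class :: "'a list set \<Rightarrow> 'a list \<Rightarrow> 'a list set" where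
  "syn_class K w = {v. syn_equiv K v w}"

definition syn_states :: "'a list set \<Rightarrow> 'a list set set" where
  "syn_states K = range (syn_class K)"

text \<open>Transition of Syn(K): [w] --a--> [wa] (well defined since the congruence is right-compatible).\<close>
definition syn_delta :: "'a list set \<Rightarrow> 'a \<Rightarrow> 'a list set \<Rightarrow> 'a list set" where
  "syn_delta K a c = syn_class K ((SOME w. w \<in> c) @ [a])"

definition syn_final :: "'a list set \<Rightarrow> 'a list set set" where
  "syn_final K = syn_class K ` K"

definition pow_syn :: "'a list set \<Rightarrow> ('a list set set, 'a) jsl_dfa" where
  "pow_syn K = \<lparr> carrier = Pow (syn_states K),
                 le = (\<subseteq>),
                 trans = (\<lambda>a X. syn_delta K a ` X),
                 init = {syn_class K []},
                 final = {X \<in> Pow (syn_states K). X \<inter> syn_final K \<noteq> {}} \<rparr>"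

inductive_set blrq_set :: "'a list set \<Rightarrow> 'a list set set" for L where
  deriv: "deriv2 u L v \<in> blrq_set L"
| empty: "{} \<in> blrq_set L"
| compl: "K \<in> blrq_set L \<Longrightarrow> - K \<in> blrq_set L"
| union: "K \<in> blrq_set L \<Longrightarrow> K' \<in> blrq_set L \<Longrightarrow> K \<union> K' \<in> blrq_set L"

definition blrq :: "'a list set \<Rightarrow> ('a list set, 'a) jsl_dfa" where
  "blrq L = \<lparr> carrier = blrq_set L,
              le = (\<subseteq>),
              trans = (\<lambda>a K. {w. a # w \<in> K}),
              init = L,
              final = {K \<in> blrq_set L. [] \<in> K} \<rparr>"

definition is_atom :: "'a list set \<Rightarrow> 'a list set \<Rightarrow> bool" where
  "is_atom L A \<longleftrightarrow> A \<in> blrq_set L \<and> A \<noteq> {} \<and> (\<forall>B\<in>blrq_set L. B \<subseteq> A \<longrightarrow> B = {} \<or> B = A)"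

definition At :: "'a list set \<Rightarrow> 'a list \<Rightarrow> 'a list set" where
  "At L x = (THE A. is_atom L A \<and> x \<in> A)"

definition iso_map :: "'a list set \<Rightarrow> 'a list set set \<Rightarrow> 'a list set" where
  "iso_map L X = \<Inter> {- At L (rev w) | w. syn_class (rev_lang L) w \<in> X}"

end

theory Submission
  imports Defs "HOL-Library.FuncSet"
begin

text \<open>For regular \<open>L\<close> the boolean algebra \<open>BLRQ(L)\<close> consists of the unions of syntactic
  classes of \<open>L\<close>: each two-sided derivative is such a union, and conversely each of the finitely
  many classes is a finite intersection of derivatives and their complements. So \<open>At(x) = [x]\<^sub>L\<close>,
  and since \<open>[w]\<^sub>L\<close> determines the state \<open>[w\<^sup>r]\<close> of \<open>Syn(L\<^sup>r)\<close>, the map sends \<open>X\<close> to the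
  complement of the preimage of \<open>X\<close> under \<open>w \<mapsto> [w\<^sup>r]\<close>. This is an order-reversing bijection
  from sets of states onto unions of classes, turning unions into intersections, and it matches
  the transition \<open>[w\<^sup>r] \<mapsto> [(a w)\<^sup>r]\<close> of \<open>Syn(L\<^sup>r)\<close> with the dual transition \<open>\<delta>\<^sub>a\<^sup>*(K)\<close>, the set
  of words \<open>v\<close> such that \<open>w \<in> K\<close> whenever \<open>v \<equiv>\<^sub>L a w\<close>.\<close>

lemma syn_equiv_refl: "syn_equiv K w w"
  by (simp add: syn_equiv_def)

lemma syn_equiv_sym: "syn_equiv K v w \<Longrightarrow> syn_equiv K w v"
  by (simp add: syn_equiv_def)

lemma syn_equiv_trans: "syn_equiv K u v \<Longrightarrow> syn_equiv K v w \<Longrightarrow> syn_equiv K u w"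
  by (simp add: syn_equiv_def)

lemma syn_equiv_append_right: "syn_equiv K v w \<Longrightarrow> syn_equiv K (v @ u) (w @ u)"
  unfolding syn_equiv_def by (metis append.assoc)

lemma mem_syn_class_iff: "v \<in> syn_class K w \<longleftrightarrow> syn_equiv K v w"
  by (simp add: syn_class_def)

lemma syn_class_self: "w \<in> syn_class K w"
  by (simp add: mem_syn_class_iff syn_equiv_refl)

lemma syn_class_eq_iff: "syn_class K v = syn_class K w \<longleftrightarrow> syn_equiv K v w"
  unfolding syn_class_def
  by (auto intro: syn_equiv_refl dest: syn_equiv_sym syn_equiv_trans)

lemma syn_delta_syn_class: "syn_delta K a (syn_class K w) = syn_class K (w @ [a])"
proof -
  have "(SOME v. v \<in> syn_class K w) \<in> syn_class K w"
    by (rule someI[of _ w]) (rule syn_class_self)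
  then show ?thesis
    unfolding syn_delta_def by (simp add: syn_class_eq_iff mem_syn_class_iff syn_equiv_append_right)
qed

lemma mem_rev_lang_iff: "w \<in> rev_lang L \<longleftrightarrow> rev w \<in> L"
  unfolding rev_lang_def by (metis image_iff rev_rev_ident)

lemma syn_equiv_rev_lang_iff: "syn_equiv (rev_lang L) v w \<longleftrightarrow> syn_equiv L (rev v) (rev w)"
  unfolding syn_equiv_def mem_rev_lang_iff by (metis rev_append rev_rev_ident append.assoc)

text \<open>The state \<open>[w\<^sup>r]\<close> of \<open>Syn(L\<^sup>r)\<close>, indexed by \<open>w\<close> so that it depends only on \<open>[w]\<^sub>L\<close>.\<close>
definition rev_syn_class :: "'a list set \<Rightarrow> 'a list \<Rightarrow> 'a list set" where
  "rev_syn_class L w = syn_class (rev_lang L) (rev w)"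

lemma rev_syn_class_eq_iff: "rev_syn_class L v = rev_syn_class L w \<longleftrightarrow> syn_equiv L v w"
  by (simp add: rev_syn_class_def syn_class_eq_iff syn_equiv_rev_lang_iff)

lemma syn_states_rev_lang: "syn_states (rev_lang L) = range (rev_syn_class L)"
proof -
  have "range (syn_class (rev_lang L)) = range (syn_class (rev_lang L) \<circ> rev)"
    by (metis rev_rev_ident comp_apply surjI image_comp)
  then show ?thesis unfolding syn_states_def rev_syn_class_def by (simp add: comp_def)
qed

lemma syn_delta_rev_syn_class:
  "syn_delta (rev_lang L) a (rev_syn_class L w) = rev_syn_class L (a # w)"
  by (simp add: rev_syn_class_def syn_delta_syn_class)

lemma syn_final_rev_lang: "syn_final (rev_lang L) = rev_syn_class L ` L"
  unfolding syn_final_def rev_syn_class_def rev_lang_def by (simp add: image_image)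

lemma finite_range_if_factors:
  assumes "finite (range f)" and "\<And>v w. f v = f w \<Longrightarrow> g v = g w"
  shows "finite (range g)"
proof -
  have "g w = g (inv f (f w))" for w
    using assms(2) by (metis f_inv_into_f rangeI)
  then have "range g \<subseteq> (g \<circ> inv f) ` range f" by auto
  then show ?thesis using assms(1) by (meson finite_imageI finite_subset)
qed

lemma foldl_closed: "q \<in> Q \<Longrightarrow> \<forall>q\<in>Q. \<forall>a. \<delta> q a \<in> Q \<Longrightarrow> foldl \<delta> q w \<in> Q"
  by (induction w arbitrary: q) auto

text \<open>The syntactic class of \<open>w\<close> is determined by the action of \<open>w\<close> on the states of an automaton.\<close>
lemma regular_finite_syn_states:
  assumes "regular L"
  shows "finite (syn_states L)"
proof -
  obtain Q :: "nat set" and \<delta> q0 F where Q: "finite Q" "q0 \<in> Q" "\<forall>q\<in>Q. \<forall>a. \<delta> q a \<in> Q"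
      and L: "L = {w. foldl \<delta> q0 w \<in> F}"
    using assms unfolding regular_def by blast
  define \<tau> where "\<tau> w = restrict (\<lambda>q. foldl \<delta> q w) Q" for w
  have "range \<tau> \<subseteq> Q \<rightarrow>\<^sub>E Q"
    using Q(3) by (auto simp: \<tau>_def intro: foldl_closed)
  then have "finite (range \<tau>)"
    using Q(1) by (meson finite_PiE finite_subset)
  moreover have "syn_class L v = syn_class L w" if "\<tau> v = \<tau> w" for v w
  proof -
    have "foldl \<delta> q v = foldl \<delta> q w" if "q \<in> Q" for q
      using fun_cong[OF \<open>\<tau> v = \<tau> w\<close>, of q] that by (simp add: \<tau>_def)
    moreover have "foldl \<delta> q0 x \<in> Q" for x
      using Q(2,3) by (rule foldl_closed)
    ultimately have "syn_equiv L v w"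
      unfolding syn_equiv_def L by simp
    then show ?thesis by (simp add: syn_class_eq_iff)
  qed
  ultimately show ?thesis
    unfolding syn_states_def by (rule finite_range_if_factors)
qed

lemma finite_syn_states_rev_lang:
  assumes "regular L"
  shows "finite (syn_states (rev_lang L))"
  unfolding syn_states_rev_lang
  using regular_finite_syn_states[OF assms] unfolding syn_states_def
  by (rule finite_range_if_factors) (simp add: syn_class_eq_iff rev_syn_class_eq_iff)

definition syn_saturated :: "'a list set \<Rightarrow> 'a list set set" where
  "syn_saturated L = {B. \<forall>v w. syn_equiv L v w \<longrightarrow> (v \<in> B \<longleftrightarrow> w \<in> B)}"

lemma syn_class_saturated: "syn_class L w \<in> syn_saturated L"
  unfolding syn_saturated_def by (simp add: mem_syn_class_iff) (meson syn_equiv_sym syn_equiv_trans)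

lemma syn_class_subset_saturated:
  "B \<in> syn_saturated L \<Longrightarrow> x \<in> B \<Longrightarrow> syn_class L x \<subseteq> B"
  unfolding syn_saturated_def by (auto simp: mem_syn_class_iff)

lemma syn_saturated_eq_Union_syn_class:
  "B \<in> syn_saturated L \<Longrightarrow> B = \<Union> (syn_class L ` B)"
  using syn_class_subset_saturated[of B L] syn_class_self by blast

lemma finite_syn_saturated:
  assumes "finite (syn_states L)"
  shows "finite (syn_saturated L)"
proof -
  have "syn_saturated L \<subseteq> Union ` Pow (syn_states L)"
    using syn_saturated_eq_Union_syn_class unfolding syn_states_def by blast
  then show ?thesis
    using assms by (meson finite_Pow_iff finite_imageI finite_subset)
qed

lemma blrq_set_subset_saturated: "blrq_set L \<subseteq> syn_saturated L"
proof
  fix K assume "K \<in> blrq_set L"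
  then show "K \<in> syn_saturated L"
    by induction (auto simp: syn_saturated_def deriv2_def syn_equiv_def)
qed

lemma blrq_set_Union: "finite F \<Longrightarrow> F \<subseteq> blrq_set L \<Longrightarrow> \<Union>F \<in> blrq_set L"
  by (induction rule: finite_induct) (auto intro: blrq_set.intros)

lemma blrq_set_Inter:
  assumes "finite F" and "F \<subseteq> blrq_set L"
  shows "\<Inter>F \<in> blrq_set L"
proof -
  have "- \<Union>(uminus ` F) \<in> blrq_set L"
    using assms by (intro blrq_set.compl blrq_set_Union) (auto intro: blrq_set.compl)
  then show ?thesis by simp
qed

lemma syn_class_in_blrq_set:
  assumes "regular L"
  shows "syn_class L x \<in> blrq_set L"
proof -
  define D where "D = range (\<lambda>(u, v). deriv2 u L v)"
  define G where "G = {K \<in> D \<union> uminus ` D. x \<in> K}"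
  have "D \<subseteq> blrq_set L"
    unfolding D_def by (auto intro: blrq_set.deriv)
  then have G: "G \<subseteq> blrq_set L"
    unfolding G_def by (auto intro: blrq_set.compl)
  have "finite D"
    using \<open>D \<subseteq> blrq_set L\<close> blrq_set_subset_saturated
      finite_syn_saturated[OF regular_finite_syn_states[OF assms]]
    by (meson finite_subset order_trans)
  then have "finite G"
    unfolding G_def by auto
  have mem_G: "y \<in> \<Inter>G \<longleftrightarrow> (\<forall>u v. u @ y @ v \<in> L \<longleftrightarrow> u @ x @ v \<in> L)" for y
  proof
    assume y: "y \<in> \<Inter>G"
    show "\<forall>u v. u @ y @ v \<in> L \<longleftrightarrow> u @ x @ v \<in> L"
    proof (intro allI)
      fix u v
      have "deriv2 u L v \<in> G \<or> - deriv2 u L v \<in> G"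
        unfolding G_def D_def deriv2_def by auto
      then show "u @ y @ v \<in> L \<longleftrightarrow> u @ x @ v \<in> L"
        using y unfolding G_def deriv2_def by auto
    qed
  next
    assume "\<forall>u v. u @ y @ v \<in> L \<longleftrightarrow> u @ x @ v \<in> L"
    then show "y \<in> \<Inter>G"
      unfolding G_def D_def deriv2_def by auto
  qed
  then have "syn_class L x = \<Inter>G"
    by (intro set_eqI) (simp only: mem_G mem_syn_class_iff syn_equiv_def)
  then show ?thesis
    using blrq_set_Inter[OF \<open>finite G\<close> G] by simp
qed

lemma blrq_set_eq_syn_saturated:
  assumes "regular L"
  shows "blrq_set L = syn_saturated L"
proof
  show "syn_saturated L \<subseteq> blrq_set L"
  proof
    fix B assume B: "B \<in> syn_saturated L"
    have "finite (syn_class L ` B)"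
      using regular_finite_syn_states[OF assms] unfolding syn_states_def
      by (rule finite_subset[rotated]) blast
    moreover have "syn_class L ` B \<subseteq> blrq_set L"
      using syn_class_in_blrq_set[OF assms] by blast
    ultimately show "B \<in> blrq_set L"
      using syn_saturated_eq_Union_syn_class[OF B] blrq_set_Union by metis
  qed
qed (rule blrq_set_subset_saturated)

lemma At_eq_syn_class:
  assumes "regular L"
  shows "At L x = syn_class L x"
  unfolding At_def
proof (rule the_equality)
  have "B = syn_class L x"
    if "B \<in> syn_saturated L" "B \<subseteq> syn_class L x" "B \<noteq> {}" for B
  proof -
    obtain y where "y \<in> B" using \<open>B \<noteq> {}\<close> by blast
    then have "syn_class L y = syn_class L x"
      using \<open>B \<subseteq> syn_class L x\<close> by (auto simp: syn_class_eq_iff mem_syn_class_iff)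
    then show ?thesis
      using syn_class_subset_saturated[OF that(1) \<open>y \<in> B\<close>] that(2) by blast
  qed
  then show "is_atom L (syn_class L x) \<and> x \<in> syn_class L x"
    unfolding is_atom_def blrq_set_eq_syn_saturated[OF assms]
    using syn_class_saturated syn_class_self by blast
next
  fix A assume A: "is_atom L A \<and> x \<in> A"
  then have "syn_class L x \<subseteq> A"
    by (intro syn_class_subset_saturated) (auto simp: is_atom_def blrq_set_eq_syn_saturated[OF assms])
  then show "A = syn_class L x"
    using A syn_class_in_blrq_set[OF assms, of x]
    unfolding is_atom_def using syn_class_self by blast
qed

lemma is_lub_unique:
  assumes "\<And>x y. x \<in> carrier A \<Longrightarrow> y \<in> carrier A \<Longrightarrow> le A x y \<Longrightarrow> le A y x \<Longrightarrow> x = y"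
    and "is_lub A S z" and "is_lub A S z'"
  shows "z = z'"
  using assms unfolding is_lub_def by blast

lemma join_presI:
  assumes antisym: "\<And>x y. x \<in> carrier A \<Longrightarrow> y \<in> carrier A \<Longrightarrow> le A x y \<Longrightarrow> le A y x \<Longrightarrow> x = y"
    and lub_A: "\<And>S. S \<subseteq> carrier A \<Longrightarrow> is_lub A S (JA S)"
    and lub_B: "\<And>S. S \<subseteq> carrier B \<Longrightarrow> is_lub B S (JB S)"
    and closed: "\<And>x. x \<in> carrier A \<Longrightarrow> f x \<in> carrier B"
    and hom: "\<And>S. finite S \<Longrightarrow> S \<subseteq> carrier A \<Longrightarrow> f (JA S) = JB (f ` S)"
  shows "join_pres A B f"
  unfolding join_pres_def
proof (intro allI impI, elim conjE)
  fix S z assume S: "finite S" "S \<subseteq> carrier A" and "is_lub A S z"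
  then have "z = JA S"
    using is_lub_unique[OF antisym] lub_A by blast
  moreover have "is_lub B (f ` S) (JB (f ` S))"
    using S(2) closed by (intro lub_B) blast
  ultimately show "is_lub B (f ` S) (f z)"
    using hom[OF S] by simp
qed

lemma is_jsl_dfaI:
  assumes "finite (carrier A)"
    and "\<And>x. x \<in> carrier A \<Longrightarrow> le A x x"
    and antisym: "\<And>x y. x \<in> carrier A \<Longrightarrow> y \<in> carrier A \<Longrightarrow> le A x y \<Longrightarrow> le A y x \<Longrightarrow> x = y"
    and "\<And>x y z. x \<in> carrier A \<Longrightarrow> y \<in> carrier A \<Longrightarrow> z \<in> carrier A \<Longrightarrow>
      le A x y \<Longrightarrow> le A y z \<Longrightarrow> le A x z"
    and lub: "\<And>S. S \<subseteq> carrier A \<Longrightarrow> is_lub A S (J S)"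
    and trans_closed: "\<And>a x. x \<in> carrier A \<Longrightarrow> trans A a x \<in> carrier A"
    and trans_hom: "\<And>a S. finite S \<Longrightarrow> S \<subseteq> carrier A \<Longrightarrow> trans A a (J S) = J (trans A a ` S)"
    and "init A \<in> carrier A"
    and final: "sf \<in> carrier A" "final A = {s \<in> carrier A. \<not> le A s sf}"
  shows "is_jsl_dfa A"
  unfolding is_jsl_dfa_def
proof (intro conjI)
  show "\<forall>a. join_pres A A (trans A a)"
  proof
    fix a
    from antisym lub lub trans_closed trans_hom show "join_pres A A (trans A a)"
      by (rule join_presI)
  qed
  show "\<forall>S. S \<subseteq> carrier A \<longrightarrow> (\<exists>z. is_lub A S z)"
    using lub by blast
  show "\<exists>sf\<in>carrier A. final A = {s \<in> carrier A. \<not> le A s sf}"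
    using final by blast
  show "finite (carrier A)" "init A \<in> carrier A"
    by (fact assms(1,8))+
qed (use assms(2-4,6) in blast)+

lemma largest_eqI:
  assumes "\<And>x y. x \<in> carrier A \<Longrightarrow> y \<in> carrier A \<Longrightarrow> le A x y \<Longrightarrow> le A y x \<Longrightarrow> x = y"
    and "t \<in> carrier A" and "P t" and "\<And>u. u \<in> carrier A \<Longrightarrow> P u \<Longrightarrow> le A u t"
  shows "largest A P = t"
  unfolding largest_def by (rule the_equality) (use assms in blast)+

lemma is_lub_pow_syn: "S \<subseteq> carrier (pow_syn K) \<Longrightarrow> is_lub (pow_syn K) S (\<Union>S)"
  by (auto simp: pow_syn_def is_lub_def)

lemma is_jsl_dfa_pow_syn:
  assumes "finite (syn_states K)"
  shows "is_jsl_dfa (pow_syn K)"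
proof (rule is_jsl_dfaI[where J = Union and sf = "syn_states K - syn_final K"])
  show "trans (pow_syn K) a X \<in> carrier (pow_syn K)" for a X
    by (auto simp: pow_syn_def syn_delta_def syn_states_def)
  show "syn_states K - syn_final K \<in> carrier (pow_syn K)"
    by (simp add: pow_syn_def)
  have "syn_final K \<subseteq> syn_states K"
    unfolding syn_final_def syn_states_def by blast
  then show "final (pow_syn K) =
      {s \<in> carrier (pow_syn K). \<not> le (pow_syn K) s (syn_states K - syn_final K)}"
    by (auto simp: pow_syn_def)
  show "is_lub (pow_syn K) S (\<Union>S)" if "S \<subseteq> carrier (pow_syn K)" for S
    using that by (rule is_lub_pow_syn)
  show "trans (pow_syn K) a (\<Union>S) = \<Union>(trans (pow_syn K) a ` S)" for a S
    by (auto simp: pow_syn_def)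
  show "init (pow_syn K) \<in> carrier (pow_syn K)"
    by (simp add: pow_syn_def syn_states_def)
qed (use assms in \<open>auto simp: pow_syn_def\<close>)

text \<open>The transition \<open>\<delta>\<^sub>a\<^sup>*\<close> of \<open>BLRQ(L)\<^sup>op\<close>: the largest saturated \<open>K'\<close> with \<open>a\<^sup>-\<^sup>1K' \<subseteq> K\<close>.\<close>
definition blrq_op_trans :: "'a list set \<Rightarrow> 'a \<Rightarrow> 'a list set \<Rightarrow> 'a list set" where
  "blrq_op_trans L a K = {v. \<forall>w. syn_equiv L v (a # w) \<longrightarrow> w \<in> K}"

definition blrq_op :: "'a list set \<Rightarrow> ('a list set, 'a) jsl_dfa" where
  "blrq_op L = \<lparr> carrier = syn_saturated L,
                 le = (\<lambda>K K'. K' \<subseteq> K),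
                 trans = blrq_op_trans L,
                 init = - syn_class L [],
                 final = {K \<in> syn_saturated L. \<not> L \<subseteq> K} \<rparr>"

lemma blrq_op_trans_saturated: "blrq_op_trans L a K \<in> syn_saturated L"
  unfolding syn_saturated_def blrq_op_trans_def by (simp, meson syn_equiv_sym syn_equiv_trans)

lemma compl_syn_class_saturated: "- syn_class L w \<in> syn_saturated L"
  using syn_class_saturated[of L w] by (simp add: syn_saturated_def)

lemma lang_syn_saturated: "L \<in> syn_saturated L"
proof -
  have "v \<in> L \<longleftrightarrow> w \<in> L" if "syn_equiv L v w" for v w
    using that unfolding syn_equiv_def by (metis append.left_neutral append.right_neutral)
  then show ?thesis
    unfolding syn_saturated_def by blast
qed

lemma Inter_syn_saturated: "S \<subseteq> syn_saturated L \<Longrightarrow> \<Inter>S \<in> syn_saturated L"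
  unfolding syn_saturated_def by blast

lemma dual_blrq_eq_blrq_op:
  assumes "regular L"
  shows "dual (blrq L) = blrq_op L"
proof -
  note carrier_eq = blrq_set_eq_syn_saturated[OF assms]
  have antisym: "\<And>x y. x \<in> carrier (blrq L) \<Longrightarrow> y \<in> carrier (blrq L) \<Longrightarrow>
      le (blrq L) x y \<Longrightarrow> le (blrq L) y x \<Longrightarrow> x = y"
    by (simp add: blrq_def)
  have "largest (blrq L) (\<lambda>K'. le (blrq L) (trans (blrq L) a K') K) = blrq_op_trans L a K" for a K
  proof (rule largest_eqI[OF antisym])
    show "blrq_op_trans L a K \<in> carrier (blrq L)"
      by (simp add: blrq_def carrier_eq blrq_op_trans_saturated)
    show "le (blrq L) (trans (blrq L) a (blrq_op_trans L a K)) K"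
      by (auto simp: blrq_def blrq_op_trans_def syn_equiv_refl)
    fix K' assume "K' \<in> carrier (blrq L)" "le (blrq L) (trans (blrq L) a K') K"
    then show "le (blrq L) K' (blrq_op_trans L a K)"
      by (auto simp: blrq_def blrq_op_trans_def carrier_eq syn_saturated_def)
  qed
  moreover have "largest (blrq L) (\<lambda>K. K \<notin> final (blrq L)) = - syn_class L []"
  proof (rule largest_eqI[OF antisym])
    show "- syn_class L [] \<in> carrier (blrq L)"
      by (simp add: blrq_def carrier_eq compl_syn_class_saturated)
    show "- syn_class L [] \<notin> final (blrq L)"
      by (simp add: blrq_def syn_class_self)
    fix K assume "K \<in> carrier (blrq L)" "K \<notin> final (blrq L)"
    then have "K \<in> syn_saturated L" "[] \<notin> K"
      by (auto simp: blrq_def carrier_eq)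
    then show "le (blrq L) K (- syn_class L [])"
      unfolding syn_saturated_def by (auto simp: blrq_def mem_syn_class_iff)
  qed
  ultimately show ?thesis
    unfolding dual_def blrq_op_def by (simp add: blrq_def carrier_eq fun_eq_iff)
qed

lemma is_lub_blrq_op: "S \<subseteq> carrier (blrq_op L) \<Longrightarrow> is_lub (blrq_op L) S (\<Inter>S)"
  using Inter_syn_saturated[of S L] by (auto simp: is_lub_def blrq_op_def)

lemma is_jsl_dfa_blrq_op:
  assumes "regular L"
  shows "is_jsl_dfa (blrq_op L)"
proof (rule is_jsl_dfaI[where J = Inter and sf = L])
  show "finite (carrier (blrq_op L))"
    using finite_syn_saturated[OF regular_finite_syn_states[OF assms]] by (simp add: blrq_op_def)
  show "is_lub (blrq_op L) S (\<Inter>S)" if "S \<subseteq> carrier (blrq_op L)" for S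
    using that by (rule is_lub_blrq_op)
  show "trans (blrq_op L) a (\<Inter>S) = \<Inter>(trans (blrq_op L) a ` S)" for a S
    by (auto simp: blrq_op_def blrq_op_trans_def)
qed (auto simp: blrq_op_def blrq_op_trans_saturated compl_syn_class_saturated lang_syn_saturated)

lemma bij_betw_compl_vimage:
  "bij_betw (\<lambda>X. - (c -` X)) (Pow (range c)) {B. \<forall>v w. c v = c w \<longrightarrow> (v \<in> B \<longleftrightarrow> w \<in> B)}"
  unfolding bij_betw_def
proof
  show "inj_on (\<lambda>X. - (c -` X)) (Pow (range c))"
  proof (rule inj_onI)
    fix X Y assume "X \<in> Pow (range c)" "Y \<in> Pow (range c)" "- (c -` X) = - (c -` Y)"
    then have "c ` (c -` X) = c ` (c -` Y)" "c ` (c -` X) = X" "c ` (c -` Y) = Y"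
      by (auto simp: image_vimage_eq)
    then show "X = Y" by simp
  qed
  show "(\<lambda>X. - (c -` X)) ` Pow (range c) = {B. \<forall>v w. c v = c w \<longrightarrow> (v \<in> B \<longleftrightarrow> w \<in> B)}"
  proof (intro equalityI subsetI)
    fix B assume "B \<in> {B. \<forall>v w. c v = c w \<longrightarrow> (v \<in> B \<longleftrightarrow> w \<in> B)}"
    then have "B = - (c -` (c ` (- B)))" by blast
    moreover have "c ` (- B) \<in> Pow (range c)" by blast
    ultimately show "B \<in> (\<lambda>X. - (c -` X)) ` Pow (range c)" by (rule image_eqI)
  qed auto
qed

lemma syn_saturated_eq_rev_syn_class:
  "syn_saturated L = {B. \<forall>v w. rev_syn_class L v = rev_syn_class L w \<longrightarrow> (v \<in> B \<longleftrightarrow> w \<in> B)}"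
  unfolding syn_saturated_def rev_syn_class_eq_iff ..

lemma iso_map_eq_compl_vimage:
  assumes "regular L"
  shows "iso_map L X = - (rev_syn_class L -` X)"
proof (intro set_eqI)
  fix v
  have At_iff: "v \<in> At L (rev w) \<longleftrightarrow> rev_syn_class L v = syn_class (rev_lang L) w" for w
    by (simp add: At_eq_syn_class[OF assms] mem_syn_class_iff rev_syn_class_def
        syn_class_eq_iff syn_equiv_rev_lang_iff)
  have "v \<in> iso_map L X \<longleftrightarrow> (\<forall>w. syn_class (rev_lang L) w \<in> X \<longrightarrow> v \<notin> At L (rev w))"
    unfolding iso_map_def by auto
  also have "\<dots> \<longleftrightarrow> rev_syn_class L v \<notin> X"
    unfolding At_iff rev_syn_class_def by auto
  finally show "v \<in> iso_map L X \<longleftrightarrow> v \<in> - (rev_syn_class L -` X)"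
    by simp
qed

lemma jsl_iso_pow_syn_blrq_op:
  "jsl_iso (pow_syn (rev_lang L)) (blrq_op L) (\<lambda>X. - (rev_syn_class L -` X))"
  unfolding jsl_iso_def
proof (intro conjI ballI allI)
  let ?f = "\<lambda>X. - (rev_syn_class L -` X)"
  have carrier: "carrier (pow_syn (rev_lang L)) = Pow (range (rev_syn_class L))"
    by (simp add: pow_syn_def syn_states_rev_lang)
  show bij: "bij_betw ?f (carrier (pow_syn (rev_lang L))) (carrier (blrq_op L))"
    using bij_betw_compl_vimage[of "rev_syn_class L"]
    by (simp add: carrier blrq_op_def syn_saturated_eq_rev_syn_class)
  show "join_pres (pow_syn (rev_lang L)) (blrq_op L) ?f"
  proof (rule join_presI[where JA = Union and JB = Inter])
    show "?f x \<in> carrier (blrq_op L)" if "x \<in> carrier (pow_syn (rev_lang L))" for x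
      using bij_betw_apply[OF bij that] .
    show "x = y" if "x \<in> carrier (pow_syn (rev_lang L))" "y \<in> carrier (pow_syn (rev_lang L))"
      "le (pow_syn (rev_lang L)) x y" "le (pow_syn (rev_lang L)) y x" for x y
      using that by (simp add: pow_syn_def)
    show "- (rev_syn_class L -` \<Union>S) = \<Inter>(?f ` S)" for S
      by auto
  qed (fact is_lub_pow_syn is_lub_blrq_op)+
  show "?f (trans (pow_syn (rev_lang L)) a X) = trans (blrq_op L) a (?f X)"
    if "X \<in> carrier (pow_syn (rev_lang L))" for a X
  proof -
    have image: "trans (pow_syn (rev_lang L)) a (rev_syn_class L ` W) =
        (\<lambda>w. rev_syn_class L (a # w)) ` W" for W
      by (simp add: pow_syn_def image_image syn_delta_rev_syn_class)
    have "X = rev_syn_class L ` (rev_syn_class L -` X)"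
      using that by (auto simp: carrier)
    then have "trans (pow_syn (rev_lang L)) a X =
        (\<lambda>w. rev_syn_class L (a # w)) ` (rev_syn_class L -` X)"
      using image by metis
    then show ?thesis
      by (auto simp: blrq_op_def blrq_op_trans_def rev_syn_class_eq_iff[symmetric])
  qed
  have "init (pow_syn (rev_lang L)) = {rev_syn_class L []}"
    by (simp add: pow_syn_def rev_syn_class_def)
  moreover have "rev_syn_class L -` {rev_syn_class L []} = syn_class L []"
    by (intro set_eqI) (simp add: rev_syn_class_eq_iff mem_syn_class_iff)
  ultimately show "?f (init (pow_syn (rev_lang L))) = init (blrq_op L)"
    by (simp add: blrq_op_def)
  show "X \<in> final (pow_syn (rev_lang L)) \<longleftrightarrow> ?f X \<in> final (blrq_op L)"
    if "X \<in> carrier (pow_syn (rev_lang L))" for X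
    using that bij_betw_apply[OF bij that]
    by (auto simp: pow_syn_def blrq_op_def syn_final_rev_lang)
qed

theorem proposition3p13:
  fixes L :: "('a::finite) list set"
  assumes "regular L"
  shows "is_jsl_dfa (pow_syn (rev_lang L)) \<and> is_jsl_dfa (dual (blrq L))
    \<and> jsl_iso (pow_syn (rev_lang L)) (dual (blrq L)) (iso_map L)"
proof -
  have "iso_map L = (\<lambda>X. - (rev_syn_class L -` X))"
    using iso_map_eq_compl_vimage[OF assms] by blast
  then show ?thesis
    using is_jsl_dfa_pow_syn[OF finite_syn_states_rev_lang[OF assms]]
      is_jsl_dfa_blrq_op[OF assms] jsl_iso_pow_syn_blrq_op[of L]
    by (simp add: dual_blrq_eq_blrq_op[OF assms])
qed

end
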